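(* Let $r\ge2$ be an integer. There exists $\alpha_0>0$ such that for every $\alpha\in(0,\alpha_0]$ there exists $\varepsilon_0>0$ such that for every $\varepsilon\in(0,\varepsilon_0]$ there exists $n_0$ such that for all $n\ge n_0$ the following holds. Suppose that $G$ is an $n$-vertex graph that contains at most $\varepsilon n^r$ copies of $K_r$ and $\sigma(G)\ge 2\left(1-\frac{1}{r-1}-\alpha\right)n$. Then $G$ admits a $\sqrt{\alpha}$-independent set of size at least $\frac{n}{r-1}$.
   Context: All graphs are finite and simple. $\sigma(G):=\min\{d(x)+d(y): x\ne y,\ xy\notin E(G)\}$ ($+\infty$ if $G$ is complete). For an $n$-vertex graph $G$ and $\gamma>0$, a set $S\subseteq V(G)$ is $\gamma$-independent if $G[S]$ has at most $\gamma n^2$ edges. *)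

theory Defs
  imports Complex_Main "HOL-Library.Extended_Real"
begin

definition simple_graph :: "'a set \<Rightarrow> ('a \<Rightarrow> 'a \<Rightarrow> bool) \<Rightarrow> bool" where
  "simple_graph V E \<longleftrightarrow> finite V \<and>
     (\<forall>x y. E x y \<longrightarrow> x \<in> V \<and> y \<in> V \<and> x \<noteq> y) \<and>
     (\<forall>x y. E x y \<longrightarrow> E y x)"

definition degree :: "'a set \<Rightarrow> ('a \<Rightarrow> 'a \<Rightarrow> bool) \<Rightarrow> 'a \<Rightarrow> nat" where
  "degree V E x = card {y \<in> V. E x y}"

text \<open>sigma(G) = min of d(x)+d(y) over distinct non-adjacent pairs; +infinity if none.\<close>
definition sigma :: "'a set \<Rightarrow> ('a \<Rightarrow> 'a \<Rightarrow> bool) \<Rightarrow> ereal" where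
  "sigma V E = (INF p \<in> {(x, y). x \<in> V \<and> y \<in> V \<and> x \<noteq> y \<and> \<not> E x y}.
                  ereal (real (degree V E (fst p) + degree V E (snd p))))"

definition num_cliques :: "'a set \<Rightarrow> ('a \<Rightarrow> 'a \<Rightarrow> bool) \<Rightarrow> nat \<Rightarrow> nat" where
  "num_cliques V E r = card {S. S \<subseteq> V \<and> card S = r \<and> (\<forall>x\<in>S. \<forall>y\<in>S. x \<noteq> y \<longrightarrow> E x y)}"

definition edges_in :: "('a \<Rightarrow> 'a \<Rightarrow> bool) \<Rightarrow> 'a set \<Rightarrow> nat" where
  "edges_in E S = card {{x, y} | x y. x \<in> S \<and> y \<in> S \<and> E x y}"

definition gamma_independent :: "'a set \<Rightarrow> ('a \<Rightarrow> 'a \<Rightarrow> bool) \<Rightarrow> real \<Rightarrow> 'a set \<Rightarrow> bool" where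
  "gamma_independent V E \<gamma> S \<longleftrightarrow> S \<subseteq> V \<and> real (edges_in E S) \<le> \<gamma> * (real (card V))^2"

end

theory Submission
  imports Defs
begin

text \<open>
  Write r = m + 2 and \<beta> = 1/(r - 1), and call a vertex high if its degree is at least
  (1 - \<beta> - \<alpha>)n. The bound on \<sigma>(G) makes the low vertices a clique, and a clique with
  more than \<beta>n/2 vertices would already contain too many copies of K_r; so the low
  vertices are few. A high vertex misses at most (\<beta> + \<alpha>)n vertices, hence every ordered
  clique of fewer than m high vertices has at least \<beta>n/2 high common neighbours, and there
  are at least (\<beta>n/2)^m ordered m-cliques Q of high vertices. Each edge inside the common
  neighbourhood N(Q) completes Q to a K_r, so as there are few copies of K_r some N(Q)
  spans fewer than \<surd>\<alpha> n^2/2 edges. Finally |N(Q)| \<ge> \<beta>n - m\<alpha>n, and adding at most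
  m\<alpha>n + 1 further vertices, each on at most n edges, yields the required set.
\<close>

definition clique :: "('a \<Rightarrow> 'a \<Rightarrow> bool) \<Rightarrow> 'a set \<Rightarrow> bool" where
  "clique E S \<longleftrightarrow> (\<forall>x\<in>S. \<forall>y\<in>S. x \<noteq> y \<longrightarrow> E x y)"

definition common_neighbours :: "'a set \<Rightarrow> ('a \<Rightarrow> 'a \<Rightarrow> bool) \<Rightarrow> 'a set \<Rightarrow> 'a set" where
  "common_neighbours V E X = {y \<in> V. \<forall>v\<in>X. E v y}"

definition edge_set :: "('a \<Rightarrow> 'a \<Rightarrow> bool) \<Rightarrow> 'a set \<Rightarrow> 'a set set" where
  "edge_set E S = {{x, y} | x y. x \<in> S \<and> y \<in> S \<and> E x y}"

definition ordered_cliques :: "('a \<Rightarrow> 'a \<Rightarrow> bool) \<Rightarrow> 'a set \<Rightarrow> nat \<Rightarrow> 'a list set" where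
  "ordered_cliques E H k = {Q. length Q = k \<and> distinct Q \<and> set Q \<subseteq> H \<and> clique E (set Q)}"

lemma num_cliques_eq: "num_cliques V E r = card {S. S \<subseteq> V \<and> card S = r \<and> clique E S}"
  by (simp add: num_cliques_def clique_def)

lemma edges_in_eq_card_edge_set: "edges_in E S = card (edge_set E S)"
  by (simp add: edges_in_def edge_set_def)

lemma finite_edge_set: "simple_graph V E \<Longrightarrow> finite (edge_set E S)"
  by (rule finite_subset[of _ "Pow V"]) (auto simp: edge_set_def simple_graph_def)

lemma finite_ordered_cliques: "finite H \<Longrightarrow> finite (ordered_cliques E H k)"
  by (rule finite_subset[OF _ finite_lists_length_eq[of H k]]) (auto simp: ordered_cliques_def)

lemma sigma_le_degree_sum:
  assumes "x \<in> V" "y \<in> V" "x \<noteq> y" "\<not> E x y"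
  shows "sigma V E \<le> ereal (real (degree V E x + degree V E y))"
proof -
  have "(x, y) \<in> {(x, y). x \<in> V \<and> y \<in> V \<and> x \<noteq> y \<and> \<not> E x y}"
    using assms by simp
  then show ?thesis
    unfolding sigma_def by (rule INF_lower2) simp
qed

lemma clique_low_degree:
  assumes "ereal (2 * t) \<le> sigma V E"
  shows "clique E {v \<in> V. real (degree V E v) < t}"
  unfolding clique_def
proof (intro ballI impI, rule ccontr)
  fix x y assume x: "x \<in> {v \<in> V. real (degree V E v) < t}" and y: "y \<in> {v \<in> V. real (degree V E v) < t}"
    and "x \<noteq> y" "\<not> E x y"
  then have "sigma V E \<le> ereal (real (degree V E x + degree V E y))"
    by (intro sigma_le_degree_sum) auto
  with assms have "ereal (2 * t) \<le> ereal (real (degree V E x + degree V E y))"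
    by (rule order_trans)
  with x y show False by simp
qed

lemma num_cliques_ge_clique:
  assumes "finite V" "L \<subseteq> V" "clique E L" "r \<le> card L"
  shows "(real (card L) / real r) ^ r \<le> real (num_cliques V E r)"
proof -
  have "{B. B \<subseteq> L \<and> card B = r} \<subseteq> {S. S \<subseteq> V \<and> card S = r \<and> clique E S}"
    using assms(2,3) by (auto simp: clique_def)
  then have "card {B. B \<subseteq> L \<and> card B = r} \<le> num_cliques V E r"
    unfolding num_cliques_eq using assms(1) by (intro card_mono) auto
  moreover have "card {B. B \<subseteq> L \<and> card B = r} = card L choose r"
    using assms(1,2) finite_subset by (intro n_subsets) blast
  ultimately show ?thesis
    using binomial_ge_n_over_k_pow_k[OF assms(4), where 'a = real] by linarith
qed

lemma card_clique_le:
  assumes "finite V" "L \<subseteq> V" "clique E L" "0 < r" "real r \<le> c"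
    and few: "real (num_cliques V E r) < (c / real r) ^ r"
  shows "real (card L) \<le> c"
proof (rule ccontr)
  assume "\<not> real (card L) \<le> c"
  then have "c < real (card L)" by simp
  then have "(c / real r) ^ r \<le> (real (card L) / real r) ^ r"
    using assms(4,5) by (intro power_mono divide_right_mono) auto
  also have "\<dots> \<le> real (num_cliques V E r)"
    using \<open>c < real (card L)\<close> assms(5) by (intro num_cliques_ge_clique[OF assms(1-3)]) simp
  finally show False using few by simp
qed

lemma degree_le_card: "finite V \<Longrightarrow> degree V E v \<le> card V"
  unfolding degree_def by (rule card_mono) auto

lemma card_common_neighbours_ge:
  assumes G: "simple_graph V E" and X: "finite X"
    and deg: "\<And>v. v \<in> X \<Longrightarrow> real (card V) - D \<le> real (degree V E v)"
  shows "real (card V) - real (card X) * D \<le> real (card (common_neighbours V E X))"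
proof -
  have fin: "finite V" using G by (simp add: simple_graph_def)
  let ?C = "common_neighbours V E X" and ?M = "\<lambda>v. V - {y \<in> V. E v y}"
  have "card V \<le> card (?C \<union> (\<Union>v\<in>X. ?M v))"
    using fin X by (intro card_mono) (auto simp: common_neighbours_def)
  also have "\<dots> \<le> card ?C + card (\<Union>v\<in>X. ?M v)"
    by (rule card_Un_le)
  also have "\<dots> \<le> card ?C + (\<Sum>v\<in>X. card (?M v))"
    by (rule add_left_mono[OF card_UN_le[OF X]])
  also have "\<dots> = card ?C + (\<Sum>v\<in>X. card V - degree V E v)"
    using fin by (simp add: card_Diff_subset degree_def)
  finally have "real (card V) \<le> real (card ?C) + real (\<Sum>v\<in>X. card V - degree V E v)"
    by (simp only: of_nat_add[symmetric] of_nat_le_iff)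
  moreover have "real (\<Sum>v\<in>X. card V - degree V E v) = (\<Sum>v\<in>X. real (card V) - real (degree V E v))"
    using degree_le_card[OF fin] by (simp add: of_nat_diff)
  moreover have "(\<Sum>v\<in>X. real (card V) - real (degree V E v)) \<le> real (card X) * D"
    using deg by (intro sum_bounded_above) (simp add: algebra_simps)
  ultimately show ?thesis by linarith
qed

lemma Cons_in_ordered_cliques:
  assumes G: "simple_graph V E" and Q: "Q \<in> ordered_cliques E H k"
    and v: "v \<in> H \<inter> common_neighbours V E (set Q)"
  shows "v # Q \<in> ordered_cliques E H (Suc k)"
proof -
  have "\<forall>u\<in>set Q. E u v \<and> E v u" using v G by (auto simp: common_neighbours_def simple_graph_def)
  moreover then have "v \<notin> set Q" using G by (auto simp: simple_graph_def)
  ultimately show ?thesis using Q v by (auto simp: ordered_cliques_def clique_def)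
qed

lemma card_ordered_cliques_ge:
  assumes G: "simple_graph V E" and HV: "H \<subseteq> V" and c: "0 \<le> c"
    and ext: "\<And>k Q. k < m \<Longrightarrow> Q \<in> ordered_cliques E H k \<Longrightarrow>
                c \<le> real (card (H \<inter> common_neighbours V E (set Q)))"
  shows "c ^ m \<le> real (card (ordered_cliques E H m))"
proof -
  have finH: "finite H" using G HV finite_subset by (auto simp: simple_graph_def)
  have "c ^ k \<le> real (card (ordered_cliques E H k))" if "k \<le> m" for k
    using that
  proof (induction k)
    case 0
    have "ordered_cliques E H 0 = {[]}" by (auto simp: ordered_cliques_def clique_def)
    then show ?case by simp
  next
    case (Suc k)
    let ?P = "SIGMA Q:ordered_cliques E H k. H \<inter> common_neighbours V E (set Q)"
    have "c ^ k * c \<le> real (card (ordered_cliques E H k)) * c"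
      using Suc c by (intro mult_right_mono) auto
    also have "\<dots> \<le> (\<Sum>Q\<in>ordered_cliques E H k. real (card (H \<inter> common_neighbours V E (set Q))))"
      by (intro sum_bounded_below) (use ext[of k] Suc.prems in auto)
    also have "\<dots> = real (card ?P)"
      using finite_ordered_cliques[OF finH] finH by simp
    also have "\<dots> = real (card ((\<lambda>(Q, v). v # Q) ` ?P))"
      by (simp add: card_image inj_on_def)
    also have "\<dots> \<le> real (card (ordered_cliques E H (Suc k)))"
      using Cons_in_ordered_cliques[OF G] finite_ordered_cliques[OF finH]
      by (intro of_nat_mono card_mono) auto
    finally show ?case by (simp add: mult.commute)
  qed
  then show ?thesis by simp
qed

lemma clique_Un_common_edge:
  assumes G: "simple_graph V E" and HV: "H \<subseteq> V" and Q: "Q \<in> ordered_cliques E H m"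
    and e: "e \<in> edge_set E (common_neighbours V E (set Q))"
  shows "set Q \<union> e \<subseteq> V" "card (set Q \<union> e) = m + 2" "clique E (set Q \<union> e)"
proof -
  obtain x y where e_eq: "e = {x, y}" and "E x y"
    and x: "x \<in> common_neighbours V E (set Q)" and y: "y \<in> common_neighbours V E (set Q)"
    using e by (auto simp: edge_set_def)
  have sym: "\<And>a b. E a b \<Longrightarrow> E b a" and irrefl: "\<And>a. \<not> E a a"
    using G by (auto simp: simple_graph_def)
  have Q_props: "length Q = m" "distinct Q" "set Q \<subseteq> H" "clique E (set Q)"
    using Q by (auto simp: ordered_cliques_def)
  have adj: "\<forall>v\<in>set Q. E v x \<and> E x v \<and> E v y \<and> E y v"
    using x y sym by (auto simp: common_neighbours_def)
  then have "x \<notin> set Q" "y \<notin> set Q" "x \<noteq> y"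
    using irrefl \<open>E x y\<close> by auto
  then show "card (set Q \<union> e) = m + 2"
    using Q_props(1,2) by (simp add: e_eq distinct_card)
  show "set Q \<union> e \<subseteq> V"
    using Q_props(3) HV x y by (auto simp: e_eq common_neighbours_def)
  show "clique E (set Q \<union> e)"
    using Q_props(4) adj \<open>E x y\<close> sym by (auto simp: e_eq clique_def)
qed

text \<open>
  A pair (Q, e) determines the (m + 2)-clique set Q \<union> e, and within a fixed (m + 2)-set S
  there are at most (m + 2)^m lists Q and 2^(m+2) sets e.
\<close>
lemma card_ordered_clique_edge_pairs_le:
  assumes G: "simple_graph V E" and HV: "H \<subseteq> V"
  shows "card (SIGMA Q:ordered_cliques E H m. edge_set E (common_neighbours V E (set Q)))
           \<le> (m + 2) ^ m * 2 ^ (m + 2) * num_cliques V E (m + 2)"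
proof -
  have fin: "finite V" using G by (simp add: simple_graph_def)
  define Cl where "Cl = {S. S \<subseteq> V \<and> card S = m + 2 \<and> clique E S}"
  define F where "F S = {Q. set Q \<subseteq> S \<and> length Q = m} \<times> Pow S" for S :: "'a set"
  have finCl: "finite Cl" and fin_mem: "\<And>S. S \<in> Cl \<Longrightarrow> finite S"
    using fin finite_subset by (auto simp: Cl_def)
  have "(SIGMA Q:ordered_cliques E H m. edge_set E (common_neighbours V E (set Q))) \<subseteq> (\<Union>S\<in>Cl. F S)"
  proof safe
    fix Q e assume Q: "Q \<in> ordered_cliques E H m"
      and e: "e \<in> edge_set E (common_neighbours V E (set Q))"
    have "set Q \<union> e \<in> Cl"
      using clique_Un_common_edge[OF G HV Q e] by (simp add: Cl_def)
    moreover have "(Q, e) \<in> F (set Q \<union> e)"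
      using Q by (auto simp: F_def ordered_cliques_def)
    ultimately show "(Q, e) \<in> (\<Union>S\<in>Cl. F S)" by blast
  qed
  then have "card (SIGMA Q:ordered_cliques E H m. edge_set E (common_neighbours V E (set Q)))
               \<le> card (\<Union>S\<in>Cl. F S)"
    using finCl fin_mem by (intro card_mono) (auto simp: F_def finite_lists_length_eq)
  also have "\<dots> \<le> (\<Sum>S\<in>Cl. card (F S))"
    by (rule card_UN_le[OF finCl])
  also have "\<dots> = (\<Sum>S\<in>Cl. (m + 2) ^ m * 2 ^ (m + 2))"
    using fin_mem by (intro sum.cong) (auto simp: F_def Cl_def card_cartesian_product card_lists_length_eq card_Pow)
  also have "\<dots> = (m + 2) ^ m * 2 ^ (m + 2) * num_cliques V E (m + 2)"
    by (simp add: num_cliques_eq Cl_def)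
  finally show ?thesis .
qed

lemma ordered_clique_with_sparse_common_neighbours:
  assumes G: "simple_graph V E" and HV: "H \<subseteq> V"
    and many: "real ((m + 2) ^ m * 2 ^ (m + 2) * num_cliques V E (m + 2))
                 < real (card (ordered_cliques E H m)) * T"
  shows "\<exists>Q\<in>ordered_cliques E H m. real (edges_in E (common_neighbours V E (set Q))) < T"
proof (rule ccontr)
  assume "\<not> ?thesis"
  then have dense: "\<And>Q. Q \<in> ordered_cliques E H m \<Longrightarrow> T \<le> real (card (edge_set E (common_neighbours V E (set Q))))"
    by (auto simp: edges_in_eq_card_edge_set not_less)
  have finH: "finite H" using G HV finite_subset by (auto simp: simple_graph_def)
  have "real (card (ordered_cliques E H m)) * T
          \<le> (\<Sum>Q\<in>ordered_cliques E H m. real (card (edge_set E (common_neighbours V E (set Q)))))"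
    using dense by (rule sum_bounded_below)
  also have "\<dots> = real (card (SIGMA Q:ordered_cliques E H m. edge_set E (common_neighbours V E (set Q))))"
    using finite_ordered_cliques[OF finH] finite_edge_set[OF G] by simp
  also have "\<dots> \<le> real ((m + 2) ^ m * 2 ^ (m + 2) * num_cliques V E (m + 2))"
    using card_ordered_clique_edge_pairs_le[OF G HV] by (rule of_nat_mono)
  finally show False using many by simp
qed

lemma edges_in_Un_le:
  assumes G: "simple_graph V E" and AV: "A \<subseteq> V"
  shows "edges_in E (X \<union> A) \<le> edges_in E X + card A * card V"
proof -
  have fin: "finite V" using G by (simp add: simple_graph_def)
  have "edge_set E (X \<union> A) \<subseteq> edge_set E X \<union> (\<lambda>(a, y). {a, y}) ` (A \<times> V)"
    using G unfolding edge_set_def simple_graph_def by (auto simp: insert_commute)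
  then have "card (edge_set E (X \<union> A)) \<le> card (edge_set E X \<union> (\<lambda>(a, y). {a, y}) ` (A \<times> V))"
    using finite_edge_set[OF G] fin finite_subset[OF AV fin] by (intro card_mono) auto
  also have "\<dots> \<le> card (edge_set E X) + card ((\<lambda>(a, y). {a, y}) ` (A \<times> V))"
    by (rule card_Un_le)
  also have "card ((\<lambda>(a, y). {a, y}) ` (A \<times> V)) \<le> card A * card V"
    using card_image_le[of "A \<times> V"] fin finite_subset[OF AV fin] by (simp add: card_cartesian_product)
  finally show ?thesis by (simp add: edges_in_eq_card_edge_set)
qed

lemma exists_superset_card_ge:
  assumes G: "simple_graph V E" and NV: "N \<subseteq> V" and a: "0 \<le> a"
    and b: "b \<le> real (card V)" "b - a \<le> real (card N)"
  shows "\<exists>S. N \<subseteq> S \<and> S \<subseteq> V \<and> b \<le> real (card S) \<and>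
           real (edges_in E S) \<le> real (edges_in E N) + (a + 1) * real (card V)"
proof -
  have fin: "finite V" using G by (simp add: simple_graph_def)
  define k where "k = nat \<lceil>b\<rceil> - card N"
  have finN: "finite N" using NV fin by (rule finite_subset)
  have "nat \<lceil>b\<rceil> \<le> card V" using b(1) by (simp add: nat_le_iff ceiling_le)
  then have "k \<le> card (V - N)"
    unfolding k_def card_Diff_subset[OF finN NV] by (rule diff_le_mono)
  then obtain A where A: "A \<subseteq> V - N" "card A = k"
    by (rule obtain_subset_with_card_n)
  have card_S: "card (N \<union> A) = card N + k"
    using A finN fin by (subst card_Un_disjoint) (auto intro: finite_subset)
  have "b \<le> real (card (N \<union> A))"
    using real_nat_ceiling_ge[of b] by (simp add: card_S k_def)
  moreover have "real k \<le> a + 1"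
  proof (cases "nat \<lceil>b\<rceil> \<le> card N")
    case False
    then have "real k = real_of_int \<lceil>b\<rceil> - real (card N)" unfolding k_def by linarith
    then show ?thesis using b(2) of_int_ceiling_le_add_one[of b] by linarith
  qed (use a k_def in simp)
  then have "real k * real (card V) \<le> (a + 1) * real (card V)"
    by (rule mult_right_mono) simp
  moreover have "edges_in E (N \<union> A) \<le> edges_in E N + k * card V"
    using edges_in_Un_le[OF G, of A N] A by auto
  then have "real (edges_in E (N \<union> A)) \<le> real (edges_in E N) + real k * real (card V)"
    by (metis of_nat_add of_nat_mono of_nat_mult)
  ultimately show ?thesis
    using A NV by (intro exI[of _ "N \<union> A"]) auto
qed

text \<open>
  The first bound keeps the clique of low-degree vertices below \<beta>n/2; the second makes the
  number of copies of K_r too small for all common neighbourhoods of ordered m-cliques to be dense.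
\<close>
definition eps_threshold :: "nat \<Rightarrow> real \<Rightarrow> real" where
  "eps_threshold m \<alpha> = min ((1 / (2 * (real m + 1) * real (m + 2))) ^ (m + 2))
     ((1 / (2 * (real m + 1))) ^ m * (sqrt \<alpha> / 2) / real ((m + 2) ^ m * 2 ^ (m + 2))) / 2"

definition order_threshold :: "nat \<Rightarrow> real \<Rightarrow> nat" where
  "order_threshold m \<alpha> = nat \<lceil>2 * (real m + 1) * real (m + 2) + 4 / sqrt \<alpha>\<rceil>"

lemma eps_threshold_pos: "0 < \<alpha> \<Longrightarrow> 0 < eps_threshold m \<alpha>"
  by (simp add: eps_threshold_def)

locale few_cliques_large_sigma =
  fixes V :: "'a set" and E :: "'a \<Rightarrow> 'a \<Rightarrow> bool" and m n :: nat and \<alpha> \<epsilon> :: real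
  assumes simple: "simple_graph V E" and card_V: "card V = n"
    and alpha_pos: "0 < \<alpha>" and alpha_small: "16 * (real m + 1) ^ 2 * \<alpha> \<le> 1"
    and eps_small: "\<epsilon> \<le> eps_threshold m \<alpha>" and n_large: "order_threshold m \<alpha> \<le> n"
    and few_cliques: "real (num_cliques V E (m + 2)) \<le> \<epsilon> * real n ^ (m + 2)"
    and sigma_large: "ereal (2 * (1 - 1 / (real m + 1) - \<alpha>) * real n) \<le> sigma V E"
begin

definition \<beta> :: real where "\<beta> = 1 / (real m + 1)"

definition high :: "'a set" where
  "high = {v \<in> V. (1 - \<beta> - \<alpha>) * real n \<le> real (degree V E v)}"

lemma finite_V: "finite V"
  using simple by (simp add: simple_graph_def)

lemma high_subset: "high \<subseteq> V"
  by (auto simp: high_def)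

lemma n_ge: "2 * (real m + 1) * real (m + 2) \<le> real n" "4 \<le> sqrt \<alpha> * real n"
proof -
  have "2 * (real m + 1) * real (m + 2) + 4 / sqrt \<alpha> \<le> real n"
    using n_large unfolding order_threshold_def by linarith
  moreover have "0 < 4 / sqrt \<alpha>" "0 \<le> 2 * (real m + 1) * real (m + 2)"
    using alpha_pos by simp_all
  ultimately have "2 * (real m + 1) * real (m + 2) \<le> real n" "4 / sqrt \<alpha> \<le> real n"
    by linarith+
  then show "2 * (real m + 1) * real (m + 2) \<le> real n" "4 \<le> sqrt \<alpha> * real n"
    using alpha_pos by (simp_all add: divide_le_eq mult.commute)
qed

lemma n_pos: "0 < real n"
proof -
  have "0 < 2 * (real m + 1) * real (m + 2)" by simp
  then show ?thesis using n_ge(1) by linarith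
qed

lemma eps_less:
  "\<epsilon> < (1 / (2 * (real m + 1) * real (m + 2))) ^ (m + 2)"
  "real ((m + 2) ^ m * 2 ^ (m + 2)) * \<epsilon> < (1 / (2 * (real m + 1))) ^ m * (sqrt \<alpha> / 2)"
proof -
  let ?a = "(1 / (2 * (real m + 1) * real (m + 2))) ^ (m + 2)"
    and ?b = "(1 / (2 * (real m + 1))) ^ m * (sqrt \<alpha> / 2)" and ?K = "real ((m + 2) ^ m * 2 ^ (m + 2))"
  define \<mu> where "\<mu> = min ?a (?b / ?K)"
  have "0 < \<mu>"
    using alpha_pos by (simp add: \<mu>_def)
  moreover have "\<epsilon> \<le> \<mu> / 2"
    using eps_small unfolding eps_threshold_def \<mu>_def .
  ultimately have "\<epsilon> < \<mu>"
    by linarith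
  then show "\<epsilon> < ?a" "?K * \<epsilon> < ?b"
    by (simp_all add: \<mu>_def pos_less_divide_eq mult.commute)
qed

lemma beta_pos: "0 < \<beta>" and beta_le_one: "\<beta> \<le> 1" and m_beta_add_beta: "real m * \<beta> + \<beta> = 1"
  by (auto simp: \<beta>_def field_simps)

lemma m_alpha_le: "real m * \<alpha> \<le> sqrt \<alpha> / 4" "real m * \<alpha> \<le> \<beta>"
proof -
  have "(4 * (real m + 1) * sqrt \<alpha>) ^ 2 = 16 * (real m + 1) ^ 2 * \<alpha>"
    using alpha_pos by (simp add: power_mult_distrib) (simp add: power2_eq_square algebra_simps)
  then have "(4 * (real m + 1) * sqrt \<alpha>) ^ 2 \<le> 1 ^ 2"
    using alpha_small by simp
  then have s: "4 * (real m + 1) * sqrt \<alpha> \<le> 1"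
    by (rule power2_le_imp_le) simp
  have sqrt_pos: "0 < sqrt \<alpha>" using alpha_pos by simp
  have "real m * \<alpha> = (real m * sqrt \<alpha>) * sqrt \<alpha>"
    using alpha_pos by (simp add: mult.assoc)
  also have "\<dots> \<le> (1 / 4) * sqrt \<alpha>"
  proof (rule mult_right_mono)
    have "4 * (real m + 1) * sqrt \<alpha> = 4 * (real m * sqrt \<alpha>) + 4 * sqrt \<alpha>"
      by (simp add: algebra_simps)
    then show "real m * sqrt \<alpha> \<le> 1 / 4" using s sqrt_pos by linarith
  qed (use sqrt_pos in simp)
  finally show "real m * \<alpha> \<le> sqrt \<alpha> / 4" by simp
  also have "\<dots> \<le> \<beta>"
    using s by (simp add: \<beta>_def field_simps)
  finally show "real m * \<alpha> \<le> \<beta>" .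
qed

lemma card_low_degree_le: "real (card (V - high)) \<le> \<beta> / 2 * real n"
proof (rule card_clique_le[OF finite_V, where r = "m + 2"])
  have "V - high = {v \<in> V. real (degree V E v) < (1 - \<beta> - \<alpha>) * real n}"
    by (auto simp: high_def)
  also have "clique E \<dots>"
    using sigma_large unfolding \<beta>_def mult.assoc by (rule clique_low_degree)
  finally show "clique E (V - high)" .
  show "real (m + 2) \<le> \<beta> / 2 * real n"
    using n_ge(1) by (simp add: \<beta>_def field_simps)
  have "\<beta> / 2 * real n / real (m + 2) = 1 / (2 * (real m + 1) * real (m + 2)) * real n"
    by (simp add: \<beta>_def)
  then have "(\<beta> / 2 * real n / real (m + 2)) ^ (m + 2) = (1 / (2 * (real m + 1) * real (m + 2))) ^ (m + 2) * real n ^ (m + 2)"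
    by (simp only: power_mult_distrib)
  moreover have "\<epsilon> * real n ^ (m + 2) < (1 / (2 * (real m + 1) * real (m + 2))) ^ (m + 2) * real n ^ (m + 2)"
    using eps_less(1) n_pos by (intro mult_strict_right_mono) auto
  ultimately show "real (num_cliques V E (m + 2)) < (\<beta> / 2 * real n / real (m + 2)) ^ (m + 2)"
    using few_cliques by linarith
qed auto

lemma card_common_neighbours_high_ge:
  assumes Q: "Q \<in> ordered_cliques E high k"
  shows "real n - real k * ((\<beta> + \<alpha>) * real n) \<le> real (card (common_neighbours V E (set Q)))"
proof -
  have "set Q \<subseteq> high" "card (set Q) = k"
    using Q by (auto simp: ordered_cliques_def distinct_card)
  then have deg: "\<And>v. v \<in> set Q \<Longrightarrow> real (card V) - (\<beta> + \<alpha>) * real n \<le> real (degree V E v)"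
    by (auto simp: high_def card_V algebra_simps)
  have "real (card V) - real (card (set Q)) * ((\<beta> + \<alpha>) * real n) \<le> real (card (common_neighbours V E (set Q)))"
    by (rule card_common_neighbours_ge[OF simple finite_set deg])
  with \<open>card (set Q) = k\<close> show ?thesis
    by (simp add: card_V)
qed

lemma card_high_common_neighbours_ge:
  assumes "k < m" and Q: "Q \<in> ordered_cliques E high k"
  shows "\<beta> / 2 * real n \<le> real (card (high \<inter> common_neighbours V E (set Q)))"
proof -
  let ?N = "common_neighbours V E (set Q)"
  have "real k * (\<beta> + \<alpha>) \<le> (real m - 1) * (\<beta> + \<alpha>)"
    using assms(1) beta_pos alpha_pos by (intro mult_right_mono) auto
  also have "\<dots> = (real m * \<beta> + \<beta>) + real m * \<alpha> - 2 * \<beta> - \<alpha>"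
    by (simp add: algebra_simps)
  finally have "real k * (\<beta> + \<alpha>) \<le> 1 - \<beta>"
    using m_beta_add_beta m_alpha_le(2) alpha_pos by linarith
  then have "real k * (\<beta> + \<alpha>) * real n \<le> (1 - \<beta>) * real n"
    using n_pos by (intro mult_right_mono) auto
  then have "\<beta> * real n \<le> real (card ?N)"
    using card_common_neighbours_high_ge[OF Q] by (simp add: algebra_simps)
  moreover have "card ?N \<le> card (high \<inter> ?N) + card (V - high)"
  proof -
    have "card ?N \<le> card ((high \<inter> ?N) \<union> (V - high))"
      using finite_V by (intro card_mono) (auto simp: common_neighbours_def)
    then show ?thesis using card_Un_le le_trans by blast
  qed
  ultimately show ?thesis
    using card_low_degree_le by linarith
qed

lemma card_ordered_cliques_high_ge: "(\<beta> / 2 * real n) ^ m \<le> real (card (ordered_cliques E high m))"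
  using beta_pos by (intro card_ordered_cliques_ge[OF simple high_subset] card_high_common_neighbours_ge) auto

lemma exists_sparse_common_neighbours:
  "\<exists>Q\<in>ordered_cliques E high m.
     real (edges_in E (common_neighbours V E (set Q))) < sqrt \<alpha> / 2 * real n ^ 2"
proof (rule ordered_clique_with_sparse_common_neighbours[OF simple high_subset])
  let ?K = "real ((m + 2) ^ m * 2 ^ (m + 2))"
  have "real ((m + 2) ^ m * 2 ^ (m + 2) * num_cliques V E (m + 2)) \<le> ?K * (\<epsilon> * real n ^ (m + 2))"
    using few_cliques by (simp only: of_nat_mult) (rule mult_left_mono, auto)
  also have "\<dots> = (?K * \<epsilon>) * real n ^ (m + 2)"
    by (simp only: mult.assoc)
  also have "\<dots> < ((1 / (2 * (real m + 1))) ^ m * (sqrt \<alpha> / 2)) * real n ^ (m + 2)"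
    using eps_less(2) n_pos by (intro mult_strict_right_mono) auto
  also have "\<dots> = (\<beta> / 2 * real n) ^ m * (sqrt \<alpha> / 2 * real n ^ 2)"
    unfolding \<beta>_def by (simp only: power_mult_distrib power_add) (simp add: mult_ac)
  also have "\<dots> \<le> real (card (ordered_cliques E high m)) * (sqrt \<alpha> / 2 * real n ^ 2)"
    using card_ordered_cliques_high_ge by (rule mult_right_mono) (use alpha_pos in simp)
  finally show "real ((m + 2) ^ m * 2 ^ (m + 2) * num_cliques V E (m + 2))
                  < real (card (ordered_cliques E high m)) * (sqrt \<alpha> / 2 * real n ^ 2)" .
qed

lemma exists_sqrt_independent_set: "\<exists>S. gamma_independent V E (sqrt \<alpha>) S \<and> \<beta> * real n \<le> real (card S)"
proof -
  obtain Q where Q: "Q \<in> ordered_cliques E high m"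
    and sparse: "real (edges_in E (common_neighbours V E (set Q))) < sqrt \<alpha> / 2 * real n ^ 2"
    using exists_sparse_common_neighbours by blast
  let ?N = "common_neighbours V E (set Q)"
  have "real m * (\<beta> * real n) = (real m * \<beta> + \<beta>) * real n - \<beta> * real n"
    by (simp add: algebra_simps)
  also have "\<dots> = real n - \<beta> * real n"
    using m_beta_add_beta by simp
  moreover have "real m * ((\<beta> + \<alpha>) * real n) = real m * (\<beta> * real n) + real m * \<alpha> * real n"
    by (simp add: algebra_simps)
  ultimately have "\<beta> * real n - real m * \<alpha> * real n \<le> real (card ?N)"
    using card_common_neighbours_high_ge[OF Q] by linarith
  moreover have "\<beta> * real n \<le> real (card V)"
    using beta_le_one n_pos by (simp add: card_V)
  moreover have "?N \<subseteq> V" "0 \<le> real m * \<alpha> * real n"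
    using alpha_pos by (auto simp: common_neighbours_def)
  ultimately obtain S where S: "S \<subseteq> V" "\<beta> * real n \<le> real (card S)"
    and edges: "real (edges_in E S) \<le> real (edges_in E ?N) + (real m * \<alpha> * real n + 1) * real n"
    using exists_superset_card_ge[OF simple] card_V by metis
  have "real m * \<alpha> * real n ^ 2 \<le> sqrt \<alpha> / 4 * real n ^ 2"
    using m_alpha_le(1) by (rule mult_right_mono) simp
  moreover have "4 * real n \<le> sqrt \<alpha> * real n * real n"
    using n_ge(2) n_pos by (intro mult_right_mono) auto
  moreover have "(real m * \<alpha> * real n + 1) * real n = real m * \<alpha> * real n ^ 2 + real n"
    and "sqrt \<alpha> * real n * real n = sqrt \<alpha> * real n ^ 2"
    by (simp_all add: algebra_simps power2_eq_square)
  ultimately have "(real m * \<alpha> * real n + 1) * real n \<le> sqrt \<alpha> / 2 * real n ^ 2"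
    by linarith
  with edges sparse have "real (edges_in E S) \<le> sqrt \<alpha> * real (card V) ^ 2"
    by (simp add: card_V)
  with S show ?thesis
    unfolding gamma_independent_def by blast
qed

end

theorem proposition2p3:
  fixes r :: nat
  assumes "r \<ge> 2"
  shows "\<exists>\<alpha>0>0. \<forall>\<alpha>::real. 0 < \<alpha> \<and> \<alpha> \<le> \<alpha>0 \<longrightarrow>
          (\<exists>\<epsilon>0>0. \<forall>\<epsilon>::real. 0 < \<epsilon> \<and> \<epsilon> \<le> \<epsilon>0 \<longrightarrow>
            (\<exists>n0::nat. \<forall>n\<ge>n0. \<forall>(V::nat set) (E::nat \<Rightarrow> nat \<Rightarrow> bool).
               simple_graph V E \<and> card V = n \<and>
               real (num_cliques V E r) \<le> \<epsilon> * real n ^ r \<and>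
               sigma V E \<ge> ereal (2 * (1 - 1 / (real r - 1) - \<alpha>) * real n) \<longrightarrow>
               (\<exists>S. gamma_independent V E (sqrt \<alpha>) S \<and> real (card S) \<ge> real n / (real r - 1))))"
proof -
  obtain m where r: "r = m + 2"
    using assms by (metis add.commute le_Suc_ex)
  have "\<exists>S. gamma_independent V E (sqrt \<alpha>) S \<and> real n / (real r - 1) \<le> real (card S)"
    if "0 < \<alpha>" "\<alpha> \<le> 1 / (16 * (real m + 1) ^ 2)" "\<epsilon> \<le> eps_threshold m \<alpha>" "order_threshold m \<alpha> \<le> n"
      and "simple_graph V E \<and> card V = n \<and> real (num_cliques V E r) \<le> \<epsilon> * real n ^ r \<and>
           ereal (2 * (1 - 1 / (real r - 1) - \<alpha>) * real n) \<le> sigma V E"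
    for \<alpha> \<epsilon> :: real and n :: nat and V :: "nat set" and E
  proof -
    interpret few_cliques_large_sigma V E m n \<alpha> \<epsilon>
      using that r by unfold_locales (auto simp: field_simps)
    have "\<beta> * real n = real n / (real r - 1)"
      using r by (simp add: \<beta>_def field_simps)
    with exists_sqrt_independent_set show ?thesis
      by metis
  qed
  moreover have "0 < 1 / (16 * (real m + 1) ^ 2)"
    by simp
  ultimately show ?thesis
    using eps_threshold_pos by blast
qed

end
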